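(* The map $\psi\colon G/M\to\mathfrak P$, $gM\mapsto(g\omega_-,g\omega_+,go)$, is a homeomorphism.
   Context: Let $q\ge2$ and $\mathfrak G=(\mathfrak X,\mathfrak E)$ the $(q+1)$-regular tree with vertex set $\mathfrak X$ (discrete) and graph distance $d$. The boundary $\Omega$ is the set of infinite non-backtracking edge chains modulo "eventually equal up to shift", with the topology generated by the sets $\partial_+\vec e$ of classes of chains starting with the directed edge $\vec e$. For $\omega_1\ne\omega_2$ in $\Omega$, $]\omega_1,\omega_2[$ denotes the vertex set of the geodesic joining them. Fix a vertex $o$ and $\omega_-\neq\omega_+$ in $\Omega$ with $o\in]\omega_-,\omega_+[$. $G=\mathrm{Aut}(\mathfrak G)$ carries the topology of pointwise convergence on $\mathfrak X$ (basic neighbourhoods $\{h:hx=g_0x\ \forall x\in F\}$, $F\subseteq\mathfrak X$ finite) and acts on $\Omega$. $M=\{\gamma\in G:\gamma$ fixes every vertex of $]\omega_-,\omega_+[\}$ (a subgroup of $\mathrm{Stab}_G(o)$); $G/M$ has the quotient topology. $\mathfrak P$ is the set of triples $(\omega_1,\omega_2,x)\in\Omega\times\Omega\times\mathfrak X$ with $\omega_1\ne\omega_2$ and $x\in]\omega_1,\omega_2[$, with the subspace topology. *)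

theory Defs
  imports "HOL-Analysis.Analysis"
begin

definition nb_walk :: "('v \<Rightarrow> 'v \<Rightarrow> bool) \<Rightarrow> 'v list \<Rightarrow> bool" where
  "nb_walk E xs \<longleftrightarrow> xs \<noteq> [] \<and>
     (\<forall>i. Suc i < length xs \<longrightarrow> E (xs ! i) (xs ! Suc i)) \<and>
     (\<forall>i. Suc (Suc i) < length xs \<longrightarrow> xs ! i \<noteq> xs ! Suc (Suc i))"

text \<open>(q+1)-regular tree on the whole type 'v: symmetric, irreflexive, every vertex has
  exactly q+1 neighbours, and any two vertices are joined by a unique non-backtracking walk
  (i.e. connected and without cycles).\<close>

definition regular_tree :: "nat \<Rightarrow> ('v \<Rightarrow> 'v \<Rightarrow> bool) \<Rightarrow> bool" where
  "regular_tree q E \<longleftrightarrow>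
     (\<forall>x y. E x y \<longrightarrow> E y x) \<and> (\<forall>x. \<not> E x x) \<and>
     (\<forall>x. finite {y. E x y} \<and> card {y. E x y} = q + 1) \<and>
     (\<forall>x y. \<exists>!xs. nb_walk E xs \<and> hd xs = x \<and> last xs = y)"

definition ray :: "('v \<Rightarrow> 'v \<Rightarrow> bool) \<Rightarrow> (nat \<Rightarrow> 'v) \<Rightarrow> bool" where
  "ray E r \<longleftrightarrow> (\<forall>n. E (r n) (r (Suc n))) \<and> (\<forall>n. r (Suc (Suc n)) \<noteq> r n)"

definition ray_equiv :: "('v \<Rightarrow> 'v \<Rightarrow> bool) \<Rightarrow> ((nat \<Rightarrow> 'v) \<times> (nat \<Rightarrow> 'v)) set" where
  "ray_equiv E = {(r, s). ray E r \<and> ray E s \<and> (\<exists>k l. \<forall>n. r (n + k) = s (n + l))}"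

definition boundary :: "('v \<Rightarrow> 'v \<Rightarrow> bool) \<Rightarrow> (nat \<Rightarrow> 'v) set set" where
  "boundary E = {r. ray E r} // ray_equiv E"

definition bd_shadow :: "('v \<Rightarrow> 'v \<Rightarrow> bool) \<Rightarrow> 'v \<Rightarrow> 'v \<Rightarrow> (nat \<Rightarrow> 'v) set set" where
  "bd_shadow E x y = {\<omega> \<in> boundary E. \<exists>r\<in>\<omega>. r 0 = x \<and> r 1 = y}"

definition boundary_top :: "('v \<Rightarrow> 'v \<Rightarrow> bool) \<Rightarrow> (nat \<Rightarrow> 'v) set topology" where
  "boundary_top E = topology_generated_by ((\<lambda>(x, y). bd_shadow E x y) ` {(x, y). E x y})"

definition bi_line :: "('v \<Rightarrow> 'v \<Rightarrow> bool) \<Rightarrow> (int \<Rightarrow> 'v) \<Rightarrow> bool" where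
  "bi_line E l \<longleftrightarrow> (\<forall>i. E (l i) (l (i + 1))) \<and> (\<forall>i. l (i + 2) \<noteq> l i)"

definition geod :: "('v \<Rightarrow> 'v \<Rightarrow> bool) \<Rightarrow> (nat \<Rightarrow> 'v) set \<Rightarrow> (nat \<Rightarrow> 'v) set \<Rightarrow> 'v set" where
  "geod E \<omega>1 \<omega>2 = {x. \<exists>l. bi_line E l \<and> (\<lambda>n. l (- int n)) \<in> \<omega>1 \<and> (\<lambda>n. l (int n)) \<in> \<omega>2
                            \<and> x \<in> range l}"

definition Aut :: "('v \<Rightarrow> 'v \<Rightarrow> bool) \<Rightarrow> ('v \<Rightarrow> 'v) set" where
  "Aut E = {g. bij g \<and> (\<forall>x y. E (g x) (g y) \<longleftrightarrow> E x y)}"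

text \<open>Topology of pointwise convergence (the vertex set being discrete).\<close>

definition Aut_top :: "('v \<Rightarrow> 'v \<Rightarrow> bool) \<Rightarrow> ('v \<Rightarrow> 'v) topology" where
  "Aut_top E = topology_generated_by
     {{h \<in> Aut E. \<forall>x\<in>F. h x = g0 x} | g0 F. g0 \<in> Aut E \<and> finite F}"

definition bd_act :: "('v \<Rightarrow> 'v) \<Rightarrow> (nat \<Rightarrow> 'v) set \<Rightarrow> (nat \<Rightarrow> 'v) set" where
  "bd_act g \<omega> = (\<lambda>r. g \<circ> r) ` \<omega>"

definition quot_top :: "'a topology \<Rightarrow> ('a \<Rightarrow> 'b) \<Rightarrow> 'b topology" where
  "quot_top X f = topology (\<lambda>U. U \<subseteq> f ` topspace X \<and> openin X {x \<in> topspace X. f x \<in> U})"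

definition Mgrp :: "('v \<Rightarrow> 'v \<Rightarrow> bool) \<Rightarrow> (nat \<Rightarrow> 'v) set \<Rightarrow> (nat \<Rightarrow> 'v) set \<Rightarrow> ('v \<Rightarrow> 'v) set" where
  "Mgrp E \<omega>m \<omega>p = {\<gamma> \<in> Aut E. \<forall>x\<in>geod E \<omega>m \<omega>p. \<gamma> x = x}"

definition lcoset :: "('v \<Rightarrow> 'v) \<Rightarrow> ('v \<Rightarrow> 'v) set \<Rightarrow> ('v \<Rightarrow> 'v) set" where
  "lcoset g H = (\<lambda>m. g \<circ> m) ` H"

definition GmodM_top :: "('v \<Rightarrow> 'v \<Rightarrow> bool) \<Rightarrow> (nat \<Rightarrow> 'v) set \<Rightarrow> (nat \<Rightarrow> 'v) set \<Rightarrow> ('v \<Rightarrow> 'v) set topology" where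
  "GmodM_top E \<omega>m \<omega>p = quot_top (Aut_top E) (\<lambda>g. lcoset g (Mgrp E \<omega>m \<omega>p))"

definition Pset :: "('v \<Rightarrow> 'v \<Rightarrow> bool) \<Rightarrow> ((nat \<Rightarrow> 'v) set \<times> (nat \<Rightarrow> 'v) set \<times> 'v) set" where
  "Pset E = {(\<omega>1, \<omega>2, x). \<omega>1 \<in> boundary E \<and> \<omega>2 \<in> boundary E \<and> \<omega>1 \<noteq> \<omega>2 \<and> x \<in> geod E \<omega>1 \<omega>2}"

definition P_top :: "('v \<Rightarrow> 'v \<Rightarrow> bool) \<Rightarrow> ((nat \<Rightarrow> 'v) set \<times> (nat \<Rightarrow> 'v) set \<times> 'v) topology" where
  "P_top E = subtopology (prod_topology (boundary_top E)
                 (prod_topology (boundary_top E) (discrete_topology UNIV))) (Pset E)"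

text \<open>\<open>\<psi>(gM) = (g\<omega>-, g\<omega>+, go)\<close>, computed with any representative g of the coset.\<close>

definition psi :: "('v \<Rightarrow> 'v) set \<Rightarrow> 'v \<Rightarrow> (nat \<Rightarrow> 'v) set \<Rightarrow> (nat \<Rightarrow> 'v) set \<Rightarrow> ('v \<Rightarrow> 'v) set
     \<Rightarrow> (nat \<Rightarrow> 'v) set \<times> (nat \<Rightarrow> 'v) set \<times> 'v" where
  "psi G v0 \<omega>m \<omega>p C = (let g = (SOME g. g \<in> G \<and> g \<in> C) in (bd_act g \<omega>m, bd_act g \<omega>p, g v0))"

end

theory Submission
  imports Defs
begin

text \<open>A parametrised geodesic line \<open>l :: int \<Rightarrow> 'v\<close> is determined by its two ends and its
  base point \<open>l 0\<close>, so \<open>\<PP>\<close> is the set of lines, \<open>\<psi>\<close> becomes the orbit map \<open>g \<mapsto> g \<circ> l0\<close>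
  of the line through \<open>o\<close>, and \<open>M\<close> is the stabiliser of \<open>l0\<close>. The action on lines is transitive:
  an isomorphism between two lines extends to an automorphism, built sphere by sphere around the
  base point from bijections between the possible continuations of geodesics, which all have
  \<open>q\<close> (or \<open>q + 1\<close>) elements. So \<open>\<psi>\<close> is a continuous bijection. It is open: if \<open>F\<close> lies in
  the ball of radius \<open>n\<close> about \<open>o\<close> and a line \<open>l\<close> agrees with \<open>g \<circ> l0\<close> on \<open>[-n-1, n+1]\<close>,
  the extension can be chosen to fix that ball, giving \<open>l = g \<circ> k \<circ> l0\<close> with \<open>k\<close> fixing \<open>F\<close>;
  and these lines form a neighbourhood of \<open>g \<circ> l0\<close>, cut out by two shadows and a base point.\<close>

section \<open>Quotient topologies\<close>

lemma istopology_quot: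
  "istopology (\<lambda>U. U \<subseteq> f ` topspace X \<and> openin X {x \<in> topspace X. f x \<in> U})"
  unfolding istopology_def
proof (intro conjI; intro allI impI)
  fix S T
  assume "S \<subseteq> f ` topspace X \<and> openin X {x \<in> topspace X. f x \<in> S}"
    and "T \<subseteq> f ` topspace X \<and> openin X {x \<in> topspace X. f x \<in> T}"
  moreover have "{x \<in> topspace X. f x \<in> S \<inter> T} = {x \<in> topspace X. f x \<in> S} \<inter> {x \<in> topspace X. f x \<in> T}"
    by auto
  ultimately show "S \<inter> T \<subseteq> f ` topspace X \<and> openin X {x \<in> topspace X. f x \<in> S \<inter> T}"
    by auto
next
  fix K assume K: "\<forall>S\<in>K. S \<subseteq> f ` topspace X \<and> openin X {x \<in> topspace X. f x \<in> S}"
  have "{x \<in> topspace X. f x \<in> \<Union>K} = (\<Union>S\<in>K. {x \<in> topspace X. f x \<in> S})" by auto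
  then show "\<Union>K \<subseteq> f ` topspace X \<and> openin X {x \<in> topspace X. f x \<in> \<Union>K}"
    using K by auto
qed

lemma openin_quot_top:
  "openin (quot_top X f) U \<longleftrightarrow> U \<subseteq> f ` topspace X \<and> openin X {x \<in> topspace X. f x \<in> U}"
  by (simp add: quot_top_def istopology_quot)

lemma topspace_quot_top: "topspace (quot_top X f) = f ` topspace X"
proof -
  have "{x \<in> topspace X. f x \<in> f ` topspace X} = topspace X" by auto
  then have "openin (quot_top X f) (f ` topspace X)"
    unfolding openin_quot_top by simp
  then show ?thesis
    using openin_subset unfolding topspace_def openin_quot_top by blast
qed

lemma quotient_map_quot_top: "quotient_map X (quot_top X f) f"
  unfolding quotient_map_def topspace_quot_top by (simp add: openin_quot_top)

lemma homeomorphic_map_quot_top: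
  assumes f: "quotient_map X Y f"
    and g: "\<And>x. x \<in> topspace X \<Longrightarrow> g (p x) = f x"
    and fibres: "\<And>x y. \<lbrakk>x \<in> topspace X; y \<in> topspace X; f x = f y\<rbrakk> \<Longrightarrow> p x = p y"
  shows "homeomorphic_map (quot_top X p) Y g"
proof -
  have "quotient_map X Y (g \<circ> p)"
    using quotient_map_eq[OF f] g by (metis comp_apply)
  then have "quotient_map (quot_top X p) Y g"
    using quotient_map_compose_eq[OF quotient_map_quot_top] by blast
  moreover have "inj_on g (p ` topspace X)"
  proof (rule inj_onI)
    fix a b assume "a \<in> p ` topspace X" "b \<in> p ` topspace X" "g a = g b"
    then obtain x y where "x \<in> topspace X" "y \<in> topspace X" "a = p x" "b = p y" by blast
    then show "a = b" using g fibres \<open>g a = g b\<close> by metis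
  qed
  ultimately show ?thesis unfolding homeomorphic_map_def topspace_quot_top ..
qed

lemma Aut_bij: "g \<in> Aut E \<Longrightarrow> bij g"
  unfolding Aut_def by auto

lemma Aut_edge_iff: "g \<in> Aut E \<Longrightarrow> E (g x) (g y) \<longleftrightarrow> E x y"
  unfolding Aut_def by auto

lemma Aut_inj_iff: "g \<in> Aut E \<Longrightarrow> g x = g y \<longleftrightarrow> x = y"
  using Aut_bij bij_is_inj inj_eq by metis

lemma Aut_comp: "\<lbrakk>g \<in> Aut E; h \<in> Aut E\<rbrakk> \<Longrightarrow> g \<circ> h \<in> Aut E"
  unfolding Aut_def using bij_comp by auto

lemma Aut_inv:
  assumes g: "g \<in> Aut E"
  shows "inv g \<in> Aut E"
proof -
  have "g (inv g z) = z" for z using Aut_bij[OF g] by (simp add: bij_is_surj surj_f_inv_f)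
  then have "E (inv g x) (inv g y) \<longleftrightarrow> E x y" for x y
    using Aut_edge_iff[OF g, of "inv g x" "inv g y"] by simp
  then show ?thesis unfolding Aut_def using bij_imp_bij_inv Aut_bij[OF g] by blast
qed

lemma Aut_inv_comp: "g \<in> Aut E \<Longrightarrow> inv g \<circ> g = id"
  using Aut_bij bij_is_inj inv_o_cancel by metis

lemma Aut_comp_inv: "g \<in> Aut E \<Longrightarrow> g \<circ> inv g = id"
  using Aut_bij bij_is_surj surj_iff by metis

lemma Aut_ray: "\<lbrakk>g \<in> Aut E; ray E r\<rbrakk> \<Longrightarrow> ray E (g \<circ> r)"
  unfolding ray_def by (simp add: Aut_edge_iff Aut_inj_iff)

lemma Aut_bi_line: "\<lbrakk>g \<in> Aut E; bi_line E l\<rbrakk> \<Longrightarrow> bi_line E (g \<circ> l)"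
  unfolding bi_line_def by (simp add: Aut_edge_iff Aut_inj_iff)

lemma Aut_ray_equiv: "\<lbrakk>g \<in> Aut E; (r, s) \<in> ray_equiv E\<rbrakk> \<Longrightarrow> (g \<circ> r, g \<circ> s) \<in> ray_equiv E"
  unfolding ray_equiv_def by (auto simp: Aut_ray) metis

lemma equiv_ray_equiv: "equiv {r. ray E r} (ray_equiv E)"
proof (rule equivI)
  show "ray_equiv E \<subseteq> {r. ray E r} \<times> {r. ray E r}" unfolding ray_equiv_def by auto
  show "refl_on {r. ray E r} (ray_equiv E)"
    unfolding ray_equiv_def by (rule refl_onI) (auto intro!: exI[of _ 0])
  show "sym (ray_equiv E)"
    unfolding ray_equiv_def by (rule symI) (auto simp: eq_commute)
  show "trans (ray_equiv E)"
  proof (rule transI)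
    fix r s t assume "(r, s) \<in> ray_equiv E" "(s, t) \<in> ray_equiv E"
    then obtain k j k' j' where "ray E r" "ray E t" "\<forall>n. r (n + k) = s (n + j)" "\<forall>n. s (n + k') = t (n + j')"
      unfolding ray_equiv_def by auto
    moreover from this have "r (n + (k + k')) = t (n + (j + j'))" for n
      by (metis (no_types) add.assoc add.commute)
    ultimately show "(r, t) \<in> ray_equiv E" unfolding ray_equiv_def by blast
  qed
qed

abbreviation ray_end :: "('v \<Rightarrow> 'v \<Rightarrow> bool) \<Rightarrow> (nat \<Rightarrow> 'v) \<Rightarrow> (nat \<Rightarrow> 'v) set" where
  "ray_end E r \<equiv> ray_equiv E `` {r}"

lemma ray_end_in_boundary: "ray E r \<Longrightarrow> ray_end E r \<in> boundary E"
  unfolding boundary_def by (rule quotientI) simp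

lemma ray_in_ray_end: "ray E r \<Longrightarrow> r \<in> ray_end E r"
  using equiv_class_self[OF equiv_ray_equiv] by simp

lemma boundary_ray_end: "\<omega> \<in> boundary E \<Longrightarrow> \<exists>r. ray E r \<and> \<omega> = ray_end E r"
  unfolding boundary_def by (erule quotientE) auto

lemma boundary_eq_ray_end: "\<lbrakk>\<omega> \<in> boundary E; r \<in> \<omega>\<rbrakk> \<Longrightarrow> \<omega> = ray_end E r"
  using boundary_ray_end equiv_class_eq[OF equiv_ray_equiv] by fastforce

lemma bd_act_ray_end:
  assumes g: "g \<in> Aut E" and r: "ray E r"
  shows "bd_act g (ray_end E r) = ray_end E (g \<circ> r)"
proof
  show "bd_act g (ray_end E r) \<subseteq> ray_end E (g \<circ> r)"
    unfolding bd_act_def using Aut_ray_equiv[OF g] by auto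
  show "ray_end E (g \<circ> r) \<subseteq> bd_act g (ray_end E r)"
  proof
    fix s assume "s \<in> ray_end E (g \<circ> r)"
    then have "(inv g \<circ> (g \<circ> r), inv g \<circ> s) \<in> ray_equiv E"
      using Aut_ray_equiv[OF Aut_inv[OF g]] by blast
    then have "(r, inv g \<circ> s) \<in> ray_equiv E" using Aut_inv_comp[OF g] by (simp add: o_assoc)
    moreover have "s = g \<circ> (inv g \<circ> s)" using Aut_comp_inv[OF g] by (simp add: o_assoc)
    ultimately show "s \<in> bd_act g (ray_end E r)" unfolding bd_act_def by blast
  qed
qed

lemma bd_act_boundary: "\<lbrakk>g \<in> Aut E; \<omega> \<in> boundary E\<rbrakk> \<Longrightarrow> bd_act g \<omega> \<in> boundary E"
  using boundary_ray_end bd_act_ray_end Aut_ray ray_end_in_boundary by metis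

definition ray_minus :: "(int \<Rightarrow> 'v) \<Rightarrow> nat \<Rightarrow> 'v" where
  "ray_minus l = (\<lambda>n. l (- int n))"

definition ray_plus :: "(int \<Rightarrow> 'v) \<Rightarrow> nat \<Rightarrow> 'v" where
  "ray_plus l = (\<lambda>n. l (int n))"

lemma comp_ray_minus: "g \<circ> ray_minus l = ray_minus (g \<circ> l)"
  unfolding ray_minus_def by auto

lemma comp_ray_plus: "g \<circ> ray_plus l = ray_plus (g \<circ> l)"
  unfolding ray_plus_def by auto

definition Aut_nbhd :: "('v \<Rightarrow> 'v \<Rightarrow> bool) \<Rightarrow> ('v \<Rightarrow> 'v) \<Rightarrow> 'v set \<Rightarrow> ('v \<Rightarrow> 'v) set" where
  "Aut_nbhd E h F = {h' \<in> Aut E. \<forall>x\<in>F. h' x = h x}"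

lemma Aut_top_eq: "Aut_top E = topology_generated_by {Aut_nbhd E g F | g F. g \<in> Aut E \<and> finite F}"
  unfolding Aut_top_def Aut_nbhd_def ..

lemma topspace_Aut_top: "topspace (Aut_top E) = Aut E"
proof -
  have "id \<in> Aut E" unfolding Aut_def by simp
  then show ?thesis unfolding Aut_top_eq topology_generated_by_topspace Aut_nbhd_def by blast
qed

lemma openin_Aut_top:
  "openin (Aut_top E) U \<longleftrightarrow> U \<subseteq> Aut E \<and> (\<forall>h\<in>U. \<exists>F. finite F \<and> Aut_nbhd E h F \<subseteq> U)"
proof
  assume U: "openin (Aut_top E) U"
  have "generate_topology_on {Aut_nbhd E g F | g F. g \<in> Aut E \<and> finite F} U"
    using U unfolding Aut_top_eq by (rule openin_topology_generated_by)
  then have "\<forall>h\<in>U. \<exists>F. finite F \<and> Aut_nbhd E h F \<subseteq> U"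
  proof (induction rule: generate_topology_on.induct)
    case (Int a b)
    show ?case
    proof
      fix h assume "h \<in> a \<inter> b"
      then obtain F1 F2 where "finite F1" "Aut_nbhd E h F1 \<subseteq> a" "finite F2" "Aut_nbhd E h F2 \<subseteq> b"
        using Int.IH by blast
      then show "\<exists>F. finite F \<and> Aut_nbhd E h F \<subseteq> a \<inter> b"
        by (intro exI[of _ "F1 \<union> F2"]) (auto simp: Aut_nbhd_def)
    qed
  next
    case (UN K)
    then show ?case by (meson UnionE UnionI subset_iff)
  next
    case (Basis s)
    then show ?case unfolding Aut_nbhd_def by force
  qed simp
  then show "U \<subseteq> Aut E \<and> (\<forall>h\<in>U. \<exists>F. finite F \<and> Aut_nbhd E h F \<subseteq> U)"
    using openin_subset[OF U] unfolding topspace_Aut_top by auto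
next
  assume U: "U \<subseteq> Aut E \<and> (\<forall>h\<in>U. \<exists>F. finite F \<and> Aut_nbhd E h F \<subseteq> U)"
  show "openin (Aut_top E) U"
  proof (subst openin_subopen, intro ballI)
    fix h assume h: "h \<in> U"
    then obtain F where F: "finite F" "Aut_nbhd E h F \<subseteq> U" using U by blast
    have "openin (Aut_top E) (Aut_nbhd E h F)"
      unfolding Aut_top_eq by (rule topology_generated_by_Basis) (use F(1) h U in blast)
    moreover have "h \<in> Aut_nbhd E h F" unfolding Aut_nbhd_def using h U by auto
    ultimately show "\<exists>T. openin (Aut_top E) T \<and> h \<in> T \<and> T \<subseteq> U" using F(2) by blast
  qed
qed

lemma continuous_map_Aut_eval: "continuous_map (Aut_top E) (discrete_topology UNIV) (\<lambda>g. g v)"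
  unfolding continuous_map_def openin_Aut_top topspace_Aut_top
proof (intro conjI allI impI ballI)
  fix U h assume "h \<in> {g \<in> Aut E. g v \<in> U}"
  then have "Aut_nbhd E h {v} \<subseteq> {g \<in> Aut E. g v \<in> U}" unfolding Aut_nbhd_def by auto
  then show "\<exists>F. finite F \<and> Aut_nbhd E h F \<subseteq> {g \<in> Aut E. g v \<in> U}" by blast
qed auto

lemma topspace_boundary_top: "topspace (boundary_top E) = boundary E"
proof -
  have "\<exists>x y. E x y \<and> \<omega> \<in> bd_shadow E x y" if \<omega>: "\<omega> \<in> boundary E" for \<omega>
  proof -
    obtain r where r: "ray E r" "\<omega> = ray_end E r" using boundary_ray_end[OF \<omega>] by blast
    then have "E (r 0) (r 1)" unfolding ray_def by (metis One_nat_def)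
    moreover have "\<omega> \<in> bd_shadow E (r 0) (r 1)"
      unfolding bd_shadow_def using \<omega> r ray_in_ray_end by blast
    ultimately show ?thesis by blast
  qed
  then show ?thesis unfolding boundary_top_def bd_shadow_def by auto
qed

lemma openin_bd_shadow: "E x y \<Longrightarrow> openin (boundary_top E) (bd_shadow E x y)"
  unfolding boundary_top_def by (rule topology_generated_by_Basis) blast

lemma topspace_P_top: "topspace (P_top E) = Pset E"
  unfolding P_top_def Pset_def using topspace_boundary_top by auto

lemma continuous_map_bd_act:
  assumes \<omega>: "\<omega> \<in> boundary E"
  shows "continuous_map (Aut_top E) (boundary_top E) (\<lambda>g. bd_act g \<omega>)"
  unfolding boundary_top_def
proof (rule continuous_on_generated_topo)
  show "(\<lambda>g. bd_act g \<omega>) ` topspace (Aut_top E) \<subseteq> \<Union> ((\<lambda>(x, y). bd_shadow E x y) ` {(x, y). E x y})"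
    using topspace_boundary_top[of E] bd_act_boundary[OF _ \<omega>] unfolding boundary_top_def topspace_Aut_top
    by auto
next
  fix U assume "U \<in> (\<lambda>(x, y). bd_shadow E x y) ` {(x, y). E x y}"
  then obtain x y where U: "U = bd_shadow E x y" by auto
  show "openin (Aut_top E) ((\<lambda>g. bd_act g \<omega>) -` U \<inter> topspace (Aut_top E))"
    unfolding openin_Aut_top topspace_Aut_top
  proof (intro conjI ballI)
    fix h assume "h \<in> (\<lambda>g. bd_act g \<omega>) -` U \<inter> Aut E"
    then obtain s where s: "s \<in> \<omega>" "h (s 0) = x" "h (s 1) = y"
      unfolding U bd_shadow_def bd_act_def by auto
    have "bd_act h' \<omega> \<in> bd_shadow E x y" if "h' \<in> Aut_nbhd E h {s 0, s 1}" for h'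
      using that s bd_act_boundary[OF _ \<omega>]
      unfolding bd_shadow_def bd_act_def Aut_nbhd_def by force
    then have "Aut_nbhd E h {s 0, s 1} \<subseteq> (\<lambda>g. bd_act g \<omega>) -` U \<inter> Aut E"
      unfolding U Aut_nbhd_def by auto
    then show "\<exists>F. finite F \<and> Aut_nbhd E h F \<subseteq> (\<lambda>g. bd_act g \<omega>) -` U \<inter> Aut E"
      by (intro exI[of _ "{s 0, s 1}"]) simp
  qed blast
qed

lemma hd_map_upt [simp]: "hd (map f [0..<Suc n]) = f 0"
  by (simp add: upt_conv_Cons del: upt_Suc)

lemma last_map_upt [simp]: "last (map f [0..<Suc n]) = f n"
  by (simp add: last_map del: upt_Suc)

declare upt_Suc [simp del]

lemma nb_walk_singleton [simp]: "nb_walk E [x]"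
  by (simp add: nb_walk_def)

lemma nb_walk_nonempty: "nb_walk E xs \<Longrightarrow> xs \<noteq> []"
  by (simp add: nb_walk_def)

lemma nb_walk_map_ray: "ray E r \<Longrightarrow> nb_walk E (map r [0..<Suc n])"
  unfolding nb_walk_def ray_def by (auto simp: nth_map nth_upt) metis

locale regular_tree_graph =
  fixes q :: nat and E :: "'v \<Rightarrow> 'v \<Rightarrow> bool"
  assumes regular_tree: "regular_tree q E"
begin

lemma edge_sym: "E x y \<Longrightarrow> E y x"
  using regular_tree unfolding regular_tree_def by blast

lemma finite_neighbours: "finite {y. E x y}"
  using regular_tree unfolding regular_tree_def by blast

lemma card_neighbours: "card {y. E x y} = q + 1"
  using regular_tree unfolding regular_tree_def by blast

lemma nb_walk_ex1: "\<exists>!xs. nb_walk E xs \<and> hd xs = x \<and> last xs = y"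
  using regular_tree unfolding regular_tree_def by blast

lemma nb_walk_unique:
  "\<lbrakk>nb_walk E xs; nb_walk E ys; hd xs = hd ys; last xs = last ys\<rbrakk> \<Longrightarrow> xs = ys"
  using nb_walk_ex1[of "hd xs" "last xs"] by metis

definition walk_ext :: "'v list \<Rightarrow> 'v set" where
  "walk_ext xs = {z. E (hd xs) z \<and> (Suc 0 < length xs \<longrightarrow> z \<noteq> xs ! 1)}"

lemma nb_walk_Cons_iff:
  assumes "xs \<noteq> []"
  shows "nb_walk E (z # xs) \<longleftrightarrow> nb_walk E xs \<and> z \<in> walk_ext xs"
proof
  assume walk: "nb_walk E (z # xs)"
  have "nb_walk E xs"
    unfolding nb_walk_def
  proof (intro conjI allI impI)
    show "xs \<noteq> []" by (fact assms)
    show "E (xs ! i) (xs ! Suc i)" if "Suc i < length xs" for i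
      using walk that unfolding nb_walk_def by (metis Suc_less_eq length_Cons nth_Cons_Suc)
    show "xs ! i \<noteq> xs ! Suc (Suc i)" if "Suc (Suc i) < length xs" for i
      using walk that unfolding nb_walk_def by (metis Suc_less_eq length_Cons nth_Cons_Suc)
  qed
  moreover have "E z (hd xs)" "Suc 0 < length xs \<longrightarrow> z \<noteq> xs ! 1"
    using walk assms unfolding nb_walk_def by (auto simp: hd_conv_nth)
  ultimately show "nb_walk E xs \<and> z \<in> walk_ext xs"
    unfolding walk_ext_def using edge_sym by blast
next
  assume "nb_walk E xs \<and> z \<in> walk_ext xs"
  then have walk: "nb_walk E xs" and "E z (hd xs)" "Suc 0 < length xs \<longrightarrow> z \<noteq> xs ! 1"
    unfolding walk_ext_def using edge_sym by auto
  then show "nb_walk E (z # xs)"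
    using assms unfolding nb_walk_def
    by (auto simp: hd_conv_nth nth_Cons split: nat.split)
qed

definition path_to :: "'v \<Rightarrow> 'v \<Rightarrow> 'v list" where
  "path_to b v = (THE xs. nb_walk E xs \<and> hd xs = v \<and> last xs = b)"

lemma path_to: "nb_walk E (path_to b v)" "hd (path_to b v) = v" "last (path_to b v) = b"
  using theI'[OF nb_walk_ex1[of v b]] unfolding path_to_def by auto

lemma path_to_eq: "\<lbrakk>nb_walk E xs; hd xs = v; last xs = b\<rbrakk> \<Longrightarrow> path_to b v = xs"
  using nb_walk_unique path_to by metis

lemma path_to_nonempty: "path_to b v \<noteq> []"
  using path_to(1) nb_walk_nonempty by blast

lemma path_to_self: "path_to b b = [b]"
  by (rule path_to_eq) auto

lemma path_to_Cons:
  assumes "path_to b v = v # xs" "xs \<noteq> []"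
  shows "path_to b (hd xs) = xs" "v \<in> walk_ext xs"
proof -
  have "nb_walk E (v # xs)" using path_to(1)[of b v] assms by simp
  then have "nb_walk E xs" "v \<in> walk_ext xs" using nb_walk_Cons_iff assms by auto
  moreover have "last xs = b" using path_to(3)[of b v] assms by simp
  ultimately show "path_to b (hd xs) = xs" "v \<in> walk_ext xs" using path_to_eq by auto
qed

lemma edge_iff_path_to_Cons:
  "E u v \<longleftrightarrow> path_to b v = v # path_to b u \<or> path_to b u = u # path_to b v"
proof
  assume uv: "E u v"
  show "path_to b v = v # path_to b u \<or> path_to b u = u # path_to b v"
  proof (cases "Suc 0 < length (path_to b u) \<and> path_to b u ! 1 = v")
    case True
    then obtain ys where ys: "path_to b u = u # ys" "ys \<noteq> []" "hd ys = v"
      using path_to(2)[of b u] path_to_nonempty[of b u]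
      by (cases "path_to b u") (auto simp: hd_conv_nth)
    then show ?thesis using path_to_Cons(1)[OF ys(1,2)] by simp
  next
    case False
    then have "nb_walk E (v # path_to b u)"
      using nb_walk_Cons_iff[OF path_to_nonempty] path_to[of b u] uv
      unfolding walk_ext_def by auto
    then show ?thesis using path_to_eq[of "v # path_to b u"] path_to_nonempty path_to by simp
  qed
next
  have "E u v" if "path_to b v = v # path_to b u" for u v
    using path_to_Cons(2)[OF that path_to_nonempty] path_to(2) unfolding walk_ext_def by simp
  then show "path_to b v = v # path_to b u \<or> path_to b u = u # path_to b v \<Longrightarrow> E u v"
    using edge_sym by blast
qed

lemma card_walk_ext:
  assumes "nb_walk E xs"
  shows "finite (walk_ext xs)" "card (walk_ext xs) = (if length xs = 1 then q + 1 else q)"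
proof -
  show "finite (walk_ext xs)"
    using finite_neighbours by (rule finite_subset[rotated]) (auto simp: walk_ext_def)
  show "card (walk_ext xs) = (if length xs = 1 then q + 1 else q)"
  proof (cases "length xs = 1")
    case True
    then have "walk_ext xs = {y. E (hd xs) y}" unfolding walk_ext_def by auto
    then show ?thesis using True card_neighbours by simp
  next
    case False
    then have long: "Suc 0 < length xs" using nb_walk_nonempty[OF assms] by (cases xs) auto
    then have "walk_ext xs = {y. E (hd xs) y} - {xs ! 1}" unfolding walk_ext_def by auto
    moreover have "E (hd xs) (xs ! 1)"
      using assms long unfolding nb_walk_def by (auto simp: hd_conv_nth)
    ultimately show ?thesis using False card_neighbours finite_neighbours by simp
  qed
qed

end

section \<open>Extending automorphisms level by level\<close>

lemma bij_betw_extend_rel: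
  assumes "finite A" "finite B" "card A = card B" "R \<subseteq> A \<times> B"
    and "single_valued R" "single_valued (R\<inverse>)"
  shows "\<exists>f. bij_betw f A B \<and> (\<forall>(a, b)\<in>R. f a = b)"
proof -
  define h where "h a = (THE b. (a, b) \<in> R)" for a
  have h: "h a = b" if "(a, b) \<in> R" for a b
    using that \<open>single_valued R\<close> unfolding h_def single_valued_def by blast
  have "bij_betw h (Domain R) (Range R)"
    unfolding bij_betw_def
  proof
    show "inj_on h (Domain R)"
      using h \<open>single_valued (R\<inverse>)\<close> unfolding single_valued_def inj_on_def by (metis DomainE converse_iff)
    show "h ` Domain R = Range R" using h by force
  qed
  moreover have sub: "Domain R \<subseteq> A" "Range R \<subseteq> B" using assms(4) by auto
  ultimately have "card (A - Domain R) = card (B - Range R)"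
    using assms(1-3) by (metis bij_betw_same_card card_Diff_subset finite_subset)
  then obtain h' where h': "bij_betw h' (A - Domain R) (B - Range R)"
    using assms(1,2) finite_same_card_bij by (metis finite_Diff)
  define f where "f a = (if a \<in> Domain R then h a else h' a)" for a
  have "bij_betw f (Domain R \<union> (A - Domain R)) (Range R \<union> (B - Range R))"
  proof (rule bij_betw_combine)
    show "bij_betw f (Domain R) (Range R)"
      using \<open>bij_betw h (Domain R) (Range R)\<close> by (rule bij_betw_cong[THEN iffD1, rotated]) (simp add: f_def)
    show "bij_betw f (A - Domain R) (B - Range R)"
      using h' by (rule bij_betw_cong[THEN iffD1, rotated]) (simp add: f_def)
  qed auto
  moreover have "Domain R \<union> (A - Domain R) = A" "Range R \<union> (B - Range R) = B" using sub by auto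
  moreover have "\<forall>(a, b)\<in>R. f a = b" using h unfolding f_def by auto
  ultimately show ?thesis by auto
qed

text \<open>A walk ending at \<open>b\<close> is transported, starting from its end, to a walk ending at \<open>b'\<close>:
  each further vertex is sent along the bijection \<open>step\<close> between the possible extensions of the
  walk and of its image constructed so far.\<close>

fun transport :: "'v \<Rightarrow> ('v list \<Rightarrow> 'v list \<Rightarrow> 'v \<Rightarrow> 'v) \<Rightarrow> 'v list \<Rightarrow> 'v list" where
  "transport b' step [] = []"
| "transport b' step [x] = [b']"
| "transport b' step (z # x # xs) =
     step (x # xs) (transport b' step (x # xs)) z # transport b' step (x # xs)"

locale tree_transport = regular_tree_graph q E for q and E :: "'v \<Rightarrow> 'v \<Rightarrow> bool" +
  fixes b b' :: 'v and step :: "'v list \<Rightarrow> 'v list \<Rightarrow> 'v \<Rightarrow> 'v"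
  assumes step_bij: "\<And>xs ys. \<lbrakk>nb_walk E xs; last xs = b; nb_walk E ys; last ys = b';
     length xs = length ys\<rbrakk> \<Longrightarrow> bij_betw (step xs ys) (walk_ext xs) (walk_ext ys)"
begin

abbreviation "tr \<equiv> transport b' step"

lemma transport_walk:
  "\<lbrakk>nb_walk E xs; last xs = b\<rbrakk> \<Longrightarrow> nb_walk E (tr xs) \<and> last (tr xs) = b' \<and> length (tr xs) = length xs"
proof (induction xs rule: induct_list012)
  case 1 then show ?case by (simp add: nb_walk_def)
next
  case (2 x) then show ?case by simp
next
  case (3 x y zs)
  have walk: "nb_walk E (y # zs)" "x \<in> walk_ext (y # zs)" using nb_walk_Cons_iff "3.prems"(1) by auto
  have IH: "nb_walk E (tr (y # zs))" "last (tr (y # zs)) = b'" "length (tr (y # zs)) = length (y # zs)"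
    using "3.IH"(2) walk "3.prems"(2) by auto
  have "step (y # zs) (tr (y # zs)) x \<in> walk_ext (tr (y # zs))"
    using step_bij[OF walk(1) _ IH(1,2) IH(3)[symmetric]] walk(2) "3.prems"(2) bij_betwE by fastforce
  then show ?case using IH nb_walk_Cons_iff by auto
qed

lemma transport_inj:
  "\<lbrakk>nb_walk E xs; last xs = b; nb_walk E xs'; last xs' = b; tr xs = tr xs'\<rbrakk> \<Longrightarrow> xs = xs'"
proof (induction xs arbitrary: xs' rule: induct_list012)
  case 1 then show ?case by (simp add: nb_walk_def)
next
  case (2 x)
  have "length xs' = length (tr xs')" using transport_walk "2.prems"(3,4) by metis
  also have "tr xs' = [b']" using "2.prems"(5) by simp
  finally show ?case using "2.prems" by (cases xs') auto
next
  case (3 x y zs)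
  have "length xs' = length (x # y # zs)" using transport_walk "3.prems" by metis
  then obtain x' y' zs' where xs': "xs' = x' # y' # zs'" by (cases xs'; cases "tl xs'") auto
  have walk: "nb_walk E (y # zs)" "x \<in> walk_ext (y # zs)" "last (y # zs) = b"
    using nb_walk_Cons_iff "3.prems" by auto
  have walk': "nb_walk E (y' # zs')" "x' \<in> walk_ext (y' # zs')" "last (y' # zs') = b"
    using nb_walk_Cons_iff "3.prems" xs' by auto
  have eq: "step (y # zs) (tr (y # zs)) x = step (y' # zs') (tr (y' # zs')) x'"
    "tr (y # zs) = tr (y' # zs')" using "3.prems"(5) xs' by auto
  have tail: "y # zs = y' # zs'" using "3.IH"(2)[OF walk(1,3) walk'(1,3) eq(2)] .
  have "bij_betw (step (y # zs) (tr (y # zs))) (walk_ext (y # zs)) (walk_ext (tr (y # zs)))"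
    using step_bij walk transport_walk[OF walk(1,3)] by simp
  then have "x = x'" using eq(1) tail walk(2) walk'(2) bij_betw_imp_inj_on inj_onD by metis
  then show ?case using xs' tail by simp
qed

lemma transport_surj: "\<lbrakk>nb_walk E ys; last ys = b'\<rbrakk> \<Longrightarrow> \<exists>xs. nb_walk E xs \<and> last xs = b \<and> tr xs = ys"
proof (induction ys rule: induct_list012)
  case 1 then show ?case by (simp add: nb_walk_def)
next
  case (2 y) then show ?case by (intro exI[of _ "[b]"]) simp
next
  case (3 y y1 zs)
  have walk: "nb_walk E (y1 # zs)" "y \<in> walk_ext (y1 # zs)" using nb_walk_Cons_iff "3.prems"(1) by auto
  obtain xs where xs: "nb_walk E xs" "last xs = b" "tr xs = y1 # zs"
    using "3.IH"(2) walk "3.prems"(2) by auto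
  have "bij_betw (step xs (tr xs)) (walk_ext xs) (walk_ext (tr xs))"
    using step_bij[OF xs(1,2)] transport_walk[OF xs(1,2)] by simp
  then obtain z where z: "z \<in> walk_ext xs" "step xs (tr xs) z = y"
    using walk(2) xs(3) unfolding bij_betw_def by force
  obtain x xs0 where xs0: "xs = x # xs0" using xs(1) nb_walk_nonempty by (cases xs) auto
  have "nb_walk E (z # xs)" "last (z # xs) = b" using nb_walk_Cons_iff xs z xs0 by auto
  moreover have "tr (z # xs) = y # y1 # zs" using xs0 xs(3) z(2) by simp
  ultimately show ?case by blast
qed

definition aut :: "'v \<Rightarrow> 'v" where
  "aut v = hd (tr (path_to b v))"

lemma transport_path_to: "tr (path_to b v) = path_to b' (aut v)"
  using transport_walk[OF path_to(1,3)] unfolding aut_def by (intro path_to_eq[symmetric]) auto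

lemma aut_base: "aut b = b'"
  unfolding aut_def path_to_self by simp

lemma aut_Cons: "\<lbrakk>path_to b v = v # xs; xs \<noteq> []\<rbrakk> \<Longrightarrow> aut v = step xs (tr xs) v"
  unfolding aut_def by (cases xs) auto

lemma bij_aut: "bij aut"
proof (rule bijI)
  show "inj aut"
  proof (rule injI)
    fix u v assume "aut u = aut v"
    then have "path_to b u = path_to b v" using transport_inj path_to transport_path_to by metis
    then show "u = v" using path_to(2) by metis
  qed
  show "surj aut"
    unfolding surj_def
  proof
    fix w
    obtain xs where xs: "nb_walk E xs" "last xs = b" "tr xs = path_to b' w"
      using transport_surj path_to by blast
    then have "path_to b (hd xs) = xs" using path_to_eq by blast
    then have "w = aut (hd xs)" unfolding aut_def using xs(3) path_to(2) by simp
    then show "\<exists>v. w = aut v" ..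
  qed
qed

lemma aut_path_to_Cons_iff:
  "path_to b' (aut v) = aut v # path_to b' (aut u) \<longleftrightarrow> path_to b v = v # path_to b u"
proof
  assume image: "path_to b' (aut v) = aut v # path_to b' (aut u)"
  obtain xs where xs0: "path_to b v = v # xs"
    using path_to(2)[of b v] path_to_nonempty[of b v] by (cases "path_to b v") auto
  have "length (path_to b v) = Suc (length (path_to b' (aut u)))"
    using image transport_walk[OF path_to(1,3), of v] transport_path_to[of v] by simp
  then have "length xs = length (path_to b' (aut u))" using xs0 by simp
  then have xs: "path_to b v = v # xs" "xs \<noteq> []" using xs0 path_to_nonempty by (metis length_0_conv)+
  have "tr (path_to b v) = aut v # tr xs" using xs aut_Cons[OF xs] by (cases xs) auto
  then have "tr xs = tr (path_to b u)" using transport_path_to image by simp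
  moreover have "nb_walk E xs" "last xs = b" using path_to_Cons[OF xs] path_to[of b "hd xs"] by auto
  ultimately have "xs = path_to b u" using transport_inj path_to by blast
  then show "path_to b v = v # path_to b u" using xs by simp
next
  assume parent: "path_to b v = v # path_to b u"
  then have "tr (path_to b v) = aut v # tr (path_to b u)"
    using aut_Cons[OF parent path_to_nonempty] path_to_nonempty[of b u] by (cases "path_to b u") auto
  then show "path_to b' (aut v) = aut v # path_to b' (aut u)" using transport_path_to by simp
qed

lemma aut_in_Aut: "aut \<in> Aut E"
proof -
  have "E (aut x) (aut y) \<longleftrightarrow> E x y" for x y
    unfolding edge_iff_path_to_Cons[of "aut x" "aut y" b'] edge_iff_path_to_Cons[of x y b]
      aut_path_to_Cons_iff ..
  then show ?thesis unfolding Aut_def using bij_aut by blast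
qed

end

context regular_tree_graph
begin

lemma bi_line_shift: "bi_line E l \<Longrightarrow> bi_line E (\<lambda>i. l (i + c))"
  unfolding bi_line_def by (metis add.commute add.left_commute)

lemma bi_line_reflect:
  assumes l: "bi_line E l"
  shows "bi_line E (\<lambda>i. l (- i))"
  unfolding bi_line_def
proof (intro conjI allI)
  fix i
  have "E (l (- i - 1)) (l (- i - 1 + 1))" "l (- i - 2 + 2) \<noteq> l (- i - 2)"
    using l unfolding bi_line_def by blast+
  moreover have "- i - 1 + 1 = - i" "- (i + 1) = - i - 1" "- i - 2 + 2 = - i" "- (i + 2) = - i - 2"
    by simp_all
  ultimately show "E (l (- i)) (l (- (i + 1)))" "l (- (i + 2)) \<noteq> l (- i)"
    using edge_sym by metis+
qed

lemma bi_line_ray_plus: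
  assumes l: "bi_line E l"
  shows "ray E (\<lambda>n. l (a + int n))"
  unfolding ray_def
proof (intro conjI allI)
  fix n
  have "E (l (a + int n)) (l (a + int n + 1))" "l (a + int n + 2) \<noteq> l (a + int n)"
    using l unfolding bi_line_def by blast+
  then show "E (l (a + int n)) (l (a + int (Suc n)))" "l (a + int (Suc (Suc n))) \<noteq> l (a + int n)"
    by (simp_all add: algebra_simps)
qed

lemma bi_line_ray: "\<lbrakk>bi_line E l; e \<in> {1, -1}\<rbrakk> \<Longrightarrow> ray E (\<lambda>n. l (a + e * int n))"
  using bi_line_ray_plus[of l a] bi_line_ray_plus[OF bi_line_reflect, of l "- a"] by auto

lemma bi_line_inj:
  assumes l: "bi_line E l"
  shows "inj l"
proof -
  have False if "l i = l j" "i < j" for i j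
  proof -
    define walk where "walk = map (\<lambda>k. l (i + int k)) [0..<Suc (nat (j - i))]"
    have "nb_walk E walk" unfolding walk_def using nb_walk_map_ray bi_line_ray_plus[OF l] .
    moreover have "hd walk = l i" "last walk = l i" unfolding walk_def using that by simp_all
    ultimately have "walk = [l i]" using nb_walk_unique[of walk "[l i]"] by simp
    then have "length walk = 1" by simp
    then show False unfolding walk_def using that by simp
  qed
  then show ?thesis by (metis injI linorder_neqE)
qed

lemma path_to_bi_line:
  assumes "bi_line E l" "e \<in> {1, -1}"
  shows "path_to (l 0) (l (e * int t)) = map (\<lambda>s. l (e * int t + (- e) * int s)) [0..<Suc t]"
  using assms by (intro path_to_eq nb_walk_map_ray bi_line_ray) auto

lemma length_path_to_bi_line:
  assumes "bi_line E l"
  shows "length (path_to (l 0) (l i)) = nat \<bar>i\<bar> + 1"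
proof -
  have "length (path_to (l 0) (l (e * int t))) = t + 1" if "e \<in> {1, -1}" for e t
    using path_to_bi_line[OF assms that] by simp
  moreover have "i = 1 * int (nat \<bar>i\<bar>) \<or> i = -1 * int (nat \<bar>i\<bar>)" by linarith
  ultimately show ?thesis by (metis insertCI)
qed

lemma path_to_bi_line_Suc:
  assumes "bi_line E l" "e \<in> {1, -1}"
  shows "path_to (l 0) (l (e * int (Suc t))) = l (e * int (Suc t)) # path_to (l 0) (l (e * int t))"
proof -
  have "map (\<lambda>s. l (e * int (Suc t) + (- e) * int s)) [0..<Suc (Suc t)] =
      l (e * int (Suc t)) # map (\<lambda>s. l (e * int (Suc t) + (- e) * int (Suc s))) [0..<Suc t]"
    by (subst map_upt_Suc) simp
  also have "map (\<lambda>s. l (e * int (Suc t) + (- e) * int (Suc s))) [0..<Suc t] =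
      map (\<lambda>s. l (e * int t + (- e) * int s)) [0..<Suc t]"
    by (simp add: algebra_simps)
  finally show ?thesis unfolding path_to_bi_line[OF assms] .
qed

text \<open>The transport steps used to move a line \<open>l\<close> onto a line \<open>l2\<close>: they send the line
  neighbours of \<open>l\<close> to the corresponding ones of \<open>l2\<close>, and are the identity wherever this is
  consistent, so that the resulting automorphism fixes a ball on which \<open>l\<close> and \<open>l2\<close> agree.\<close>

definition line_rel :: "(int \<Rightarrow> 'v) \<Rightarrow> (int \<Rightarrow> 'v) \<Rightarrow> 'v list \<Rightarrow> 'v list \<Rightarrow> ('v \<times> 'v) set" where
  "line_rel l l2 xs ys = {(l (i + e), l2 (i + e)) | i e. hd xs = l i \<and> hd ys = l2 i \<and> e \<in> {1, -1}}
     \<inter> walk_ext xs \<times> walk_ext ys"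

definition admissible_step ::
    "(int \<Rightarrow> 'v) \<Rightarrow> (int \<Rightarrow> 'v) \<Rightarrow> 'v list \<Rightarrow> 'v list \<Rightarrow> ('v \<Rightarrow> 'v) \<Rightarrow> bool" where
  "admissible_step l l2 xs ys f \<longleftrightarrow>
     bij_betw f (walk_ext xs) (walk_ext ys) \<and> (\<forall>(a, c)\<in>line_rel l l2 xs ys. f a = c) \<and>
     (xs = ys \<and> line_rel l l2 xs ys \<subseteq> Id \<longrightarrow> (\<forall>a\<in>walk_ext xs. f a = a))"

definition line_step :: "(int \<Rightarrow> 'v) \<Rightarrow> (int \<Rightarrow> 'v) \<Rightarrow> 'v list \<Rightarrow> 'v list \<Rightarrow> 'v \<Rightarrow> 'v" where
  "line_step l l2 xs ys = (SOME f. admissible_step l l2 xs ys f)"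

lemma single_valued_line_rel:
  assumes "bi_line E l"
  shows "single_valued (line_rel l l2 xs ys)"
proof (rule single_valuedI)
  fix x y z assume "(x, y) \<in> line_rel l l2 xs ys" "(x, z) \<in> line_rel l l2 xs ys"
  then obtain i e i' e' where "x = l (i + e)" "y = l2 (i + e)" "x = l (i' + e')" "z = l2 (i' + e')"
    unfolding line_rel_def by blast
  then show "y = z" using injD[OF bi_line_inj[OF assms]] by metis
qed

lemma line_rel_converse: "(line_rel l l2 xs ys)\<inverse> = line_rel l2 l ys xs"
  unfolding line_rel_def by auto

lemma line_step_admissible:
  assumes "bi_line E l" "bi_line E l2" "nb_walk E xs" "nb_walk E ys" "length xs = length ys"
  shows "admissible_step l l2 xs ys (line_step l l2 xs ys)"
proof -
  have "\<exists>f. admissible_step l l2 xs ys f"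
  proof (cases "xs = ys \<and> line_rel l l2 xs ys \<subseteq> Id")
    case True
    then show ?thesis unfolding admissible_step_def by (intro exI[of _ id]) auto
  next
    case False
    have "\<exists>f. bij_betw f (walk_ext xs) (walk_ext ys) \<and> (\<forall>(a, c)\<in>line_rel l l2 xs ys. f a = c)"
    proof (rule bij_betw_extend_rel)
      show "finite (walk_ext xs)" "finite (walk_ext ys)" "card (walk_ext xs) = card (walk_ext ys)"
        using card_walk_ext assms by auto
      show "line_rel l l2 xs ys \<subseteq> walk_ext xs \<times> walk_ext ys" unfolding line_rel_def by auto
      show "single_valued (line_rel l l2 xs ys)" "single_valued ((line_rel l l2 xs ys)\<inverse>)"
        unfolding line_rel_converse using single_valued_line_rel assms by auto
    qed
    then show ?thesis using False unfolding admissible_step_def by blast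
  qed
  then show ?thesis unfolding line_step_def by (rule someI_ex)
qed

lemma tree_transport_line:
  assumes "bi_line E l" "bi_line E l2"
  shows "tree_transport q E (l 0) (l2 0) (line_step l l2)"
  by unfold_locales (use line_step_admissible[OF assms] in \<open>simp add: admissible_step_def\<close>)

definition line_aut :: "(int \<Rightarrow> 'v) \<Rightarrow> (int \<Rightarrow> 'v) \<Rightarrow> 'v \<Rightarrow> 'v" where
  "line_aut l l2 v = hd (transport (l2 0) (line_step l l2) (path_to (l 0) v))"

lemma line_aut_in_Aut:
  assumes "bi_line E l" "bi_line E l2"
  shows "line_aut l l2 \<in> Aut E"
proof -
  interpret tree_transport q E "l 0" "l2 0" "line_step l l2" using tree_transport_line[OF assms] .
  show ?thesis using aut_in_Aut unfolding aut_def line_aut_def[abs_def] .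
qed

lemma line_aut_line:
  assumes l: "bi_line E l" and l2: "bi_line E l2"
  shows "line_aut l l2 (l i) = l2 i"
proof -
  interpret tree_transport q E "l 0" "l2 0" "line_step l l2" using tree_transport_line[OF assms] .
  have "aut (l (e * int t)) = l2 (e * int t)" if e: "e \<in> {1, -1}" for e t
  proof (induction t)
    case 0 then show ?case using aut_base by simp
  next
    case (Suc t)
    define xs where "xs = path_to (l 0) (l (e * int t))"
    define ys where "ys = path_to (l2 0) (l2 (e * int t))"
    have path: "path_to (l 0) (l (e * int (Suc t))) = l (e * int (Suc t)) # xs"
      "path_to (l2 0) (l2 (e * int (Suc t))) = l2 (e * int (Suc t)) # ys"
      unfolding xs_def ys_def using path_to_bi_line_Suc e l l2 by auto
    have "aut (l (e * int (Suc t))) = line_step l l2 xs (tr xs) (l (e * int (Suc t)))"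
      using aut_Cons[OF path(1)] path_to_nonempty unfolding xs_def by blast
    also have "tr xs = ys" unfolding xs_def ys_def transport_path_to Suc.IH ..
    finally have aut_eq: "aut (l (e * int (Suc t))) = line_step l l2 xs ys (l (e * int (Suc t)))" .
    have "(l (e * int (Suc t)), l2 (e * int (Suc t))) \<in> line_rel l l2 xs ys"
    proof -
      have "e * int (Suc t) = e * int t + e" by (simp add: algebra_simps)
      moreover have "hd xs = l (e * int t)" "hd ys = l2 (e * int t)"
        unfolding xs_def ys_def using path_to(2) by auto
      moreover have "l (e * int (Suc t)) \<in> walk_ext xs" "l2 (e * int (Suc t)) \<in> walk_ext ys"
        using path_to_Cons(2)[OF path(1)] path_to_Cons(2)[OF path(2)] path_to_nonempty
        unfolding xs_def ys_def by auto
      ultimately show ?thesis unfolding line_rel_def using e by auto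
    qed
    moreover have "admissible_step l l2 xs ys (line_step l l2 xs ys)"
      unfolding xs_def ys_def
      by (rule line_step_admissible[OF l l2 path_to(1) path_to(1)])
        (simp add: length_path_to_bi_line[OF l] length_path_to_bi_line[OF l2])
    ultimately show ?case using aut_eq unfolding admissible_step_def by auto
  qed
  moreover have "i = 1 * int (nat \<bar>i\<bar>) \<or> i = -1 * int (nat \<bar>i\<bar>)" by linarith
  ultimately have "aut (l i) = l2 i" by (metis insertCI)
  then show ?thesis unfolding line_aut_def aut_def .
qed

lemma line_rel_subset_Id:
  assumes l: "bi_line E l" and agree: "\<And>i. \<bar>i\<bar> \<le> int n + 1 \<Longrightarrow> l2 i = l i"
    and xs: "path_to (l 0) (hd xs) = xs" "length xs \<le> n"
  shows "line_rel l l2 xs xs \<subseteq> Id"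
proof
  fix p assume "p \<in> line_rel l l2 xs xs"
  then obtain i e where p: "p = (l (i + e), l2 (i + e))" "hd xs = l i" "e \<in> {1, -1}"
    unfolding line_rel_def by auto
  then have "nat \<bar>i\<bar> + 1 \<le> n" using length_path_to_bi_line[OF l, of i] xs by simp
  then show "p \<in> Id" using agree[of "i + e"] p by auto
qed

lemma line_aut_fixes_ball:
  assumes l: "bi_line E l" and l2: "bi_line E l2"
    and agree: "\<And>i. \<bar>i\<bar> \<le> int n + 1 \<Longrightarrow> l2 i = l i"
    and u: "length (path_to (l 0) u) \<le> n + 1"
  shows "line_aut l l2 u = u"
proof -
  interpret tree_transport q E "l 0" "l2 0" "line_step l l2" using tree_transport_line[OF l l2] .
  have "tr xs = xs" if "nb_walk E xs" "last xs = l 0" "length xs \<le> n + 1" for xs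
    using that
  proof (induction xs rule: induct_list012)
    case 1 then show ?case by (simp add: nb_walk_def)
  next
    case (2 x) then show ?case using agree[of 0] by simp
  next
    case (3 x y zs)
    have walk: "nb_walk E (y # zs)" "x \<in> walk_ext (y # zs)" "last (y # zs) = l 0"
      using nb_walk_Cons_iff "3.prems" by auto
    have IH: "tr (y # zs) = y # zs" using "3.IH"(2) walk "3.prems"(3) by simp
    have "path_to (l 0) (hd (y # zs)) = y # zs" using path_to_eq walk by simp
    then have "line_rel l l2 (y # zs) (y # zs) \<subseteq> Id"
      using line_rel_subset_Id[OF l agree] "3.prems"(3) by simp
    moreover have "admissible_step l l2 (y # zs) (y # zs) (line_step l l2 (y # zs) (y # zs))"
      using line_step_admissible[OF l l2 walk(1) walk(1)] by simp
    ultimately have "line_step l l2 (y # zs) (y # zs) x = x"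
      using walk(2) unfolding admissible_step_def by blast
    then show ?case using IH by simp
  qed
  then have "tr (path_to (l 0) u) = path_to (l 0) u" using u path_to by blast
  then show ?thesis unfolding line_aut_def using path_to(2) by simp
qed

end

section \<open>Geodesic lines and their ends\<close>

context regular_tree_graph
begin

lemma ray_minus_ray: "bi_line E l \<Longrightarrow> ray E (ray_minus l)"
  using bi_line_ray[of l "-1" 0] unfolding ray_minus_def by simp

lemma ray_plus_ray: "bi_line E l \<Longrightarrow> ray E (ray_plus l)"
  using bi_line_ray_plus[of l 0] unfolding ray_plus_def by simp

lemma bi_line_rays_equiv:
  assumes "bi_line E l" "e \<in> {1, -1}"
  shows "((\<lambda>n. l (a + e * int n)), (\<lambda>n. l (b + e * int n))) \<in> ray_equiv E"
proof -
  define k where "k = nat (max 0 (e * (b - a)))"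
  define j where "j = nat (max 0 (e * (a - b)))"
  have "a + e * int (n + k) = b + e * int (n + j)" for n
    using assms(2) unfolding k_def j_def by (auto simp: max_def algebra_simps)
  then have "\<forall>n. (\<lambda>n. l (a + e * int n)) (n + k) = (\<lambda>n. l (b + e * int n)) (n + j)"
    by (simp only: simp_thms)
  then show ?thesis unfolding ray_equiv_def using bi_line_ray assms by blast
qed

lemma bi_line_shift_ends:
  assumes "bi_line E l"
  shows "ray_end E (ray_minus (\<lambda>i. l (i + c))) = ray_end E (ray_minus l)"
    and "ray_end E (ray_plus (\<lambda>i. l (i + c))) = ray_end E (ray_plus l)"
proof -
  have "(ray_minus l, ray_minus (\<lambda>i. l (i + c))) \<in> ray_equiv E"
    using bi_line_rays_equiv[OF assms, of "-1" 0 c] unfolding ray_minus_def by (simp add: algebra_simps)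
  then show "ray_end E (ray_minus (\<lambda>i. l (i + c))) = ray_end E (ray_minus l)"
    using equiv_class_eq[OF equiv_ray_equiv] by metis
  have "(ray_plus l, ray_plus (\<lambda>i. l (i + c))) \<in> ray_equiv E"
    using bi_line_rays_equiv[OF assms, of 1 0 c] unfolding ray_plus_def by (simp add: algebra_simps)
  then show "ray_end E (ray_plus (\<lambda>i. l (i + c))) = ray_end E (ray_plus l)"
    using equiv_class_eq[OF equiv_ray_equiv] by metis
qed

lemma geod_bi_line:
  assumes "\<omega>1 \<in> boundary E" "\<omega>2 \<in> boundary E" "x \<in> geod E \<omega>1 \<omega>2"
  obtains l where "bi_line E l" "l 0 = x" "\<omega>1 = ray_end E (ray_minus l)" "\<omega>2 = ray_end E (ray_plus l)"
proof -
  obtain l c where l: "bi_line E l" "ray_minus l \<in> \<omega>1" "ray_plus l \<in> \<omega>2" "x = l c"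
    using assms(3) unfolding geod_def ray_minus_def ray_plus_def by blast
  show ?thesis
  proof
    show "bi_line E (\<lambda>i. l (i + c))" using bi_line_shift[OF l(1)] .
    show "(\<lambda>i. l (i + c)) 0 = x" using l(4) by simp
    show "\<omega>1 = ray_end E (ray_minus (\<lambda>i. l (i + c)))" "\<omega>2 = ray_end E (ray_plus (\<lambda>i. l (i + c)))"
      using boundary_eq_ray_end assms(1,2) l(2,3) bi_line_shift_ends[OF l(1)] by auto
  qed
qed

lemma ray_unique:
  assumes "ray E s" "ray E r" "s 0 = r 0" "(s, r) \<in> ray_equiv E"
  shows "s = r"
proof
  fix i
  obtain k j where kj: "\<forall>n. s (n + k) = r (n + j)" using assms(4) unfolding ray_equiv_def by auto
  have "map s [0..<Suc (i + k)] = map r [0..<Suc (i + j)]"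
    using nb_walk_map_ray assms(1,2) assms(3) kj by (intro nb_walk_unique) simp_all
  then have "map s [0..<Suc (i + k)] ! i = map r [0..<Suc (i + j)] ! i" by simp
  then show "s i = r i" by (simp add: nth_map del: map_upt_Suc)
qed

lemma ray_splice:
  assumes a: "ray E a" and r: "ray E r" and r01: "r 0 = a n" "r 1 = a (Suc n)"
  shows "ray E (\<lambda>k. if k \<le> n then a k else r (k - n))"
proof -
  define s where "s k = (if k \<le> n then a k else r (k - n))" for k
  have s_a: "s k = a k" if "k \<le> Suc n" for k
    using that r01 unfolding s_def by (cases "k = Suc n") auto
  have s_r: "s k = r (k - n)" if "n \<le> k" for k
    using that r01 unfolding s_def by (cases "k = n") auto
  have "E (s k) (s (Suc k)) \<and> s (Suc (Suc k)) \<noteq> s k" for k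
  proof (cases "k < n")
    case True
    then show ?thesis using a s_a unfolding ray_def by simp
  next
    case False
    then have "Suc k - n = Suc (k - n)" "Suc (Suc k) - n = Suc (Suc (k - n))" by simp_all
    then show ?thesis using r s_r False unfolding ray_def by simp
  qed
  then show ?thesis unfolding ray_def s_def by blast
qed

lemma ray_prefix_eq:
  assumes a: "ray E a" and c: "ray E c" and r: "ray E r" and "c 0 = a 0"
    and r01: "r 0 = a n" "r 1 = a (Suc n)" and "(c, r) \<in> ray_equiv E"
  shows "\<And>j. j \<le> Suc n \<Longrightarrow> c j = a j"
proof -
  define s where "s k = (if k \<le> n then a k else r (k - n))" for k
  have s: "ray E s" unfolding s_def using ray_splice[OF a r r01] .
  have "\<forall>k. s (k + n) = r (k + 0)" unfolding s_def using r01 by auto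
  then have "(s, r) \<in> ray_equiv E" unfolding ray_equiv_def using s r by blast
  then have "(c, s) \<in> ray_equiv E"
    using \<open>(c, r) \<in> ray_equiv E\<close> equiv_ray_equiv unfolding equiv_def sym_def trans_def by blast
  then have "c = s" using ray_unique[OF c s] \<open>c 0 = a 0\<close> unfolding s_def by simp
  then show "c j = a j" if "j \<le> Suc n" for j
    using that r01 unfolding s_def by (cases "j = Suc n") auto
qed

lemma bi_line_unique:
  assumes l: "bi_line E l" and l': "bi_line E l'" and "l 0 = l' 0"
    and "ray_end E (ray_minus l) = ray_end E (ray_minus l')"
    and "ray_end E (ray_plus l) = ray_end E (ray_plus l')"
  shows "l = l'"
proof
  have "(ray_minus l, ray_minus l') \<in> ray_equiv E" "(ray_plus l, ray_plus l') \<in> ray_equiv E"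
    using assms(4,5) ray_in_ray_end ray_minus_ray ray_plus_ray l' by blast+
  then have "ray_minus l = ray_minus l'" "ray_plus l = ray_plus l'"
    using ray_unique ray_minus_ray ray_plus_ray l l' \<open>l 0 = l' 0\<close>
    unfolding ray_minus_def ray_plus_def by auto
  fix i :: int
  show "l i = l' i"
  proof (cases "i \<ge> 0")
    case True
    then have "l i = ray_plus l (nat i)" "l' i = ray_plus l' (nat i)" by (simp_all add: ray_plus_def)
    then show ?thesis using \<open>ray_plus l = ray_plus l'\<close> by simp
  next
    case False
    then have "l i = ray_minus l (nat (- i))" "l' i = ray_minus l' (nat (- i))"
      by (simp_all add: ray_minus_def)
    then show ?thesis using \<open>ray_minus l = ray_minus l'\<close> by simp
  qed
qed

lemma geod_bi_line_ends:
  assumes l: "bi_line E l"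
  shows "geod E (ray_end E (ray_minus l)) (ray_end E (ray_plus l)) = range l"
proof
  show "range l \<subseteq> geod E (ray_end E (ray_minus l)) (ray_end E (ray_plus l))"
    unfolding geod_def using l ray_in_ray_end ray_minus_ray ray_plus_ray
    unfolding ray_minus_def ray_plus_def by blast
next
  show "geod E (ray_end E (ray_minus l)) (ray_end E (ray_plus l)) \<subseteq> range l"
  proof
    fix x assume x: "x \<in> geod E (ray_end E (ray_minus l)) (ray_end E (ray_plus l))"
    obtain l' where l': "bi_line E l'" "l' 0 = x"
      "ray_end E (ray_minus l) = ray_end E (ray_minus l')" "ray_end E (ray_plus l) = ray_end E (ray_plus l')"
      by (rule geod_bi_line[OF ray_end_in_boundary[OF ray_minus_ray[OF l]]
          ray_end_in_boundary[OF ray_plus_ray[OF l]] x])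
    have "(ray_minus l, ray_minus l') \<in> ray_equiv E"
      using l'(1,3) ray_in_ray_end ray_minus_ray by blast
    then obtain k j where "\<forall>n. l (- int (n + k)) = l' (- int (n + j))"
      unfolding ray_equiv_def ray_minus_def by auto
    then have kj: "l (- int k) = l' (- int j)" by (metis add_0)
    let ?m = "\<lambda>i. l (i + - int k)" and ?m' = "\<lambda>i. l' (i + - int j)"
    have "?m = ?m'"
    proof (rule bi_line_unique)
      show "bi_line E ?m" by (rule bi_line_shift[OF l])
      show "bi_line E ?m'" by (rule bi_line_shift[OF l'(1)])
      show "?m 0 = ?m' 0" using kj by simp
      show "ray_end E (ray_minus ?m) = ray_end E (ray_minus ?m')"
        "ray_end E (ray_plus ?m) = ray_end E (ray_plus ?m')"
        using bi_line_shift_ends[OF l, of "- int k"] bi_line_shift_ends[OF l'(1), of "- int j"] l'(3,4)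
        by simp_all
    qed
    then have "x = l (int j - int k)" using fun_cong[OF \<open>?m = ?m'\<close>, of "int j"] l'(2) by simp
    then show "x \<in> range l" by blast
  qed
qed

lemma bi_line_ends_distinct:
  assumes l: "bi_line E l"
  shows "ray_end E (ray_minus l) \<noteq> ray_end E (ray_plus l)"
proof
  assume "ray_end E (ray_minus l) = ray_end E (ray_plus l)"
  then have "(ray_minus l, ray_plus l) \<in> ray_equiv E"
    using ray_in_ray_end ray_plus_ray l by blast
  then obtain k j where kj: "\<forall>n. l (- int (n + k)) = l (int (n + j))"
    unfolding ray_equiv_def ray_minus_def ray_plus_def by auto
  have "- int (n + k) = int (n + j)" for n using kj bi_line_inj[OF l] by (simp add: inj_eq)
  from this[of 0] this[of 1] show False by simp
qed

definition line_triple :: "(int \<Rightarrow> 'v) \<Rightarrow> (nat \<Rightarrow> 'v) set \<times> (nat \<Rightarrow> 'v) set \<times> 'v" where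
  "line_triple l = (ray_end E (ray_minus l), ray_end E (ray_plus l), l 0)"

lemma line_triple_in_Pset:
  assumes "bi_line E l"
  shows "line_triple l \<in> Pset E"
  using ray_end_in_boundary[OF ray_minus_ray[OF assms]] ray_end_in_boundary[OF ray_plus_ray[OF assms]]
    bi_line_ends_distinct[OF assms] geod_bi_line_ends[OF assms]
  unfolding line_triple_def Pset_def by simp

lemma Pset_line_triple:
  assumes "p \<in> Pset E"
  obtains l where "bi_line E l" "line_triple l = p"
proof -
  obtain \<omega>1 \<omega>2 x where p: "p = (\<omega>1, \<omega>2, x)" "\<omega>1 \<in> boundary E" "\<omega>2 \<in> boundary E"
    "x \<in> geod E \<omega>1 \<omega>2"
    using assms unfolding Pset_def by auto
  obtain l where "bi_line E l" "l 0 = x" "\<omega>1 = ray_end E (ray_minus l)" "\<omega>2 = ray_end E (ray_plus l)"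
    using geod_bi_line[OF p(2-4)] .
  then show ?thesis using that unfolding line_triple_def p(1) by simp
qed

lemma line_triple_inj: "\<lbrakk>bi_line E l; bi_line E l'; line_triple l = line_triple l'\<rbrakk> \<Longrightarrow> l = l'"
  unfolding line_triple_def using bi_line_unique by simp

end

context regular_tree_graph
begin

lemma ray_plus_reflect: "ray_plus (\<lambda>i. l (- i)) = ray_minus l"
  unfolding ray_plus_def ray_minus_def ..

lemma ray_plus_end_in_shadow:
  assumes l: "bi_line E l"
  shows "ray_end E (ray_plus l) \<in> bd_shadow E (l (int n)) (l (int (Suc n)))"
proof -
  have "(ray_plus l, \<lambda>k. l (int n + 1 * int k)) \<in> ray_equiv E"
    using bi_line_rays_equiv[OF l, of 1 0 "int n"] unfolding ray_plus_def by simp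
  then have "(\<lambda>k. l (int n + int k)) \<in> ray_end E (ray_plus l)" by simp
  moreover have "int n + int 1 = int (Suc n)" by simp
  ultimately show ?thesis
    unfolding bd_shadow_def using ray_end_in_boundary[OF ray_plus_ray[OF l]]
    by (metis (mono_tags, lifting) add_0_right mem_Collect_eq of_nat_0)
qed

lemma bi_line_agree_on_shadow:
  assumes l: "bi_line E l" and l': "bi_line E l'" and "l' 0 = l 0"
    and "ray_end E (ray_plus l') \<in> bd_shadow E (l (int n)) (l (int (Suc n)))"
  shows "\<And>j. j \<le> Suc n \<Longrightarrow> l' (int j) = l (int j)"
proof -
  obtain r where r: "r \<in> ray_end E (ray_plus l')" "r 0 = l (int n)" "r 1 = l (int (Suc n))"
    using assms(4) unfolding bd_shadow_def by blast
  have "ray_plus l' j = ray_plus l j" if "j \<le> Suc n" for j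
  proof (rule ray_prefix_eq[OF ray_plus_ray[OF l] ray_plus_ray[OF l'] _ _ _ _ _ that])
    show "ray E r" using r(1) unfolding ray_equiv_def by auto
    show "ray_plus l' 0 = ray_plus l 0" "r 0 = ray_plus l n" "r 1 = ray_plus l (Suc n)"
      using \<open>l' 0 = l 0\<close> r(2,3) unfolding ray_plus_def by simp_all
    show "(ray_plus l', r) \<in> ray_equiv E" using r(1) by simp
  qed
  then show "l' (int j) = l (int j)" if "j \<le> Suc n" for j using that unfolding ray_plus_def .
qed

definition line_nbhd :: "(int \<Rightarrow> 'v) \<Rightarrow> nat \<Rightarrow> ((nat \<Rightarrow> 'v) set \<times> (nat \<Rightarrow> 'v) set \<times> 'v) set" where
  "line_nbhd l n = Pset E \<inter>
     bd_shadow E (l (- int n)) (l (- int (Suc n))) \<times> bd_shadow E (l (int n)) (l (int (Suc n))) \<times> {l 0}"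

lemma openin_line_nbhd:
  assumes l: "bi_line E l"
  shows "openin (P_top E) (line_nbhd l n)"
proof -
  have "E (l (- int n)) (l (- int (Suc n)))" "E (l (int n)) (l (int (Suc n)))"
    using ray_minus_ray[OF l] ray_plus_ray[OF l] unfolding ray_def ray_minus_def ray_plus_def by auto
  note shadows_open = this[THEN openin_bd_shadow[of E]]
  have "openin (prod_topology (boundary_top E) (prod_topology (boundary_top E) (discrete_topology UNIV)))
    (bd_shadow E (l (- int n)) (l (- int (Suc n))) \<times> bd_shadow E (l (int n)) (l (int (Suc n))) \<times> {l 0})"
    unfolding openin_prod_Times_iff using shadows_open by simp
  then show ?thesis unfolding line_nbhd_def P_top_def by (rule openin_subtopology_Int2)
qed

lemma line_triple_in_line_nbhd:
  assumes l: "bi_line E l"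
  shows "line_triple l \<in> line_nbhd l n"
  using line_triple_in_Pset[OF l] ray_plus_end_in_shadow[OF l] ray_plus_end_in_shadow[OF bi_line_reflect[OF l]]
  unfolding line_nbhd_def line_triple_def ray_plus_reflect by simp

lemma line_nbhd_line_triple:
  assumes l: "bi_line E l" and p: "p \<in> line_nbhd l n"
  obtains l' where "bi_line E l'" "line_triple l' = p" "\<And>i. \<bar>i\<bar> \<le> int n + 1 \<Longrightarrow> l' i = l i"
proof -
  obtain l' where l': "bi_line E l'" "line_triple l' = p"
    using Pset_line_triple p unfolding line_nbhd_def by blast
  have shadows: "ray_end E (ray_minus l') \<in> bd_shadow E (l (- int n)) (l (- int (Suc n)))"
    "ray_end E (ray_plus l') \<in> bd_shadow E (l (int n)) (l (int (Suc n)))" "l' 0 = l 0"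
    using p unfolding line_nbhd_def l'(2)[symmetric] line_triple_def by auto
  have "l' i = l i" if "\<bar>i\<bar> \<le> int n + 1" for i
  proof (cases "i \<ge> 0")
    case True
    then show ?thesis
      using bi_line_agree_on_shadow[OF l l'(1) shadows(3,2), of "nat i"] that by simp
  next
    case False
    then show ?thesis
      using bi_line_agree_on_shadow[OF bi_line_reflect[OF l] bi_line_reflect[OF l'(1)], of n "nat (- i)"]
        shadows(3,1) that
      unfolding ray_plus_reflect by simp
  qed
  then show ?thesis using that l' by blast
qed

end

section \<open>The orbit map of a reference line\<close>

locale reference_line = regular_tree_graph q E for q and E :: "'v \<Rightarrow> 'v \<Rightarrow> bool" +
  fixes l0 :: "int \<Rightarrow> 'v"
  assumes l0: "bi_line E l0"
begin

abbreviation "\<omega>m \<equiv> ray_end E (ray_minus l0)"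
abbreviation "\<omega>p \<equiv> ray_end E (ray_plus l0)"
abbreviation "M \<equiv> Mgrp E \<omega>m \<omega>p"

definition orbit_map :: "('v \<Rightarrow> 'v) \<Rightarrow> (nat \<Rightarrow> 'v) set \<times> (nat \<Rightarrow> 'v) set \<times> 'v" where
  "orbit_map g = (bd_act g \<omega>m, bd_act g \<omega>p, g (l0 0))"

lemma orbit_map_eq:
  assumes g: "g \<in> Aut E"
  shows "orbit_map g = line_triple (g \<circ> l0)"
proof -
  have "bd_act g \<omega>m = ray_end E (ray_minus (g \<circ> l0))" "bd_act g \<omega>p = ray_end E (ray_plus (g \<circ> l0))"
    using bd_act_ray_end[OF g ray_minus_ray[OF l0]] bd_act_ray_end[OF g ray_plus_ray[OF l0]]
    unfolding comp_ray_minus comp_ray_plus .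
  then show ?thesis unfolding orbit_map_def line_triple_def by simp
qed

lemma Mgrp_eq: "M = {m \<in> Aut E. m \<circ> l0 = l0}"
  unfolding Mgrp_def geod_bi_line_ends[OF l0] by (auto simp: fun_eq_iff)

lemma lcoset_Mgrp:
  assumes g: "g \<in> Aut E"
  shows "lcoset g M = {k \<in> Aut E. k \<circ> l0 = g \<circ> l0}"
proof
  show "lcoset g M \<subseteq> {k \<in> Aut E. k \<circ> l0 = g \<circ> l0}"
    unfolding lcoset_def Mgrp_eq using Aut_comp[OF g] by (auto simp: o_assoc[symmetric])
  show "{k \<in> Aut E. k \<circ> l0 = g \<circ> l0} \<subseteq> lcoset g M"
  proof
    fix k assume k: "k \<in> {k \<in> Aut E. k \<circ> l0 = g \<circ> l0}"
    then have "inv g \<circ> k \<circ> l0 = inv g \<circ> g \<circ> l0" by (simp add: comp_assoc)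
    then have "inv g \<circ> k \<circ> l0 = l0" using Aut_inv_comp[OF g] by simp
    then have "inv g \<circ> k \<in> M" unfolding Mgrp_eq using Aut_comp[OF Aut_inv[OF g]] k by simp
    moreover have "k = g \<circ> (inv g \<circ> k)" using Aut_comp_inv[OF g] by (simp add: o_assoc)
    ultimately show "k \<in> lcoset g M" unfolding lcoset_def by blast
  qed
qed

lemma psi_lcoset:
  assumes g: "g \<in> Aut E"
  shows "psi (Aut E) (l0 0) \<omega>m \<omega>p (lcoset g M) = orbit_map g"
proof -
  define k where "k = (SOME k. k \<in> Aut E \<and> k \<in> lcoset g M)"
  have "g \<in> Aut E \<and> g \<in> lcoset g M" using lcoset_Mgrp g by simp
  then have "k \<in> Aut E \<and> k \<in> lcoset g M"
    unfolding k_def by (rule someI[of "\<lambda>k. k \<in> Aut E \<and> k \<in> lcoset g M"])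
  then have "k \<in> Aut E" "k \<circ> l0 = g \<circ> l0" using lcoset_Mgrp[OF g] by auto
  then have "orbit_map k = orbit_map g" using orbit_map_eq g by simp
  then show ?thesis unfolding psi_def orbit_map_def k_def Let_def by simp
qed

lemma orbit_map_image: "orbit_map ` Aut E = Pset E"
proof
  show "orbit_map ` Aut E \<subseteq> Pset E"
    using orbit_map_eq line_triple_in_Pset Aut_bi_line[OF _ l0] by auto
  show "Pset E \<subseteq> orbit_map ` Aut E"
  proof
    fix p assume "p \<in> Pset E"
    then obtain l where l: "bi_line E l" "line_triple l = p" by (rule Pset_line_triple)
    then have "line_aut l0 l \<circ> l0 = l" using line_aut_line[OF l0] by auto
    then have "orbit_map (line_aut l0 l) = p"
      using orbit_map_eq line_aut_in_Aut[OF l0 l(1)] l(2) by simp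
    then show "p \<in> orbit_map ` Aut E" using line_aut_in_Aut[OF l0 l(1)] by blast
  qed
qed

lemma lcoset_eq_if_orbit_map_eq:
  assumes "g \<in> Aut E" "h \<in> Aut E" "orbit_map g = orbit_map h"
  shows "lcoset g M = lcoset h M"
proof -
  have "line_triple (g \<circ> l0) = line_triple (h \<circ> l0)" using assms orbit_map_eq by simp
  then have "g \<circ> l0 = h \<circ> l0"
    using line_triple_inj Aut_bi_line[OF assms(1) l0] Aut_bi_line[OF assms(2) l0] by blast
  then show ?thesis using lcoset_Mgrp assms(1,2) by simp
qed

lemma continuous_map_orbit_map: "continuous_map (Aut_top E) (P_top E) orbit_map"
  unfolding P_top_def continuous_map_in_subtopology
proof
  have components: "fst \<circ> orbit_map = (\<lambda>g. bd_act g \<omega>m)"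
    "fst \<circ> (snd \<circ> orbit_map) = (\<lambda>g. bd_act g \<omega>p)" "snd \<circ> (snd \<circ> orbit_map) = (\<lambda>g. g (l0 0))"
    unfolding orbit_map_def by auto
  show "continuous_map (Aut_top E)
      (prod_topology (boundary_top E) (prod_topology (boundary_top E) (discrete_topology UNIV))) orbit_map"
    unfolding continuous_map_pairwise components
    by (intro conjI continuous_map_bd_act continuous_map_Aut_eval ray_end_in_boundary
        ray_minus_ray ray_plus_ray l0)
  show "orbit_map \<in> topspace (Aut_top E) \<rightarrow> Pset E"
    using orbit_map_image topspace_Aut_top by auto
qed

lemma line_nbhd_subset_orbit_map:
  assumes h: "h \<in> Aut E" and F: "\<And>u. u \<in> F \<Longrightarrow> length (path_to (l0 0) u) \<le> n + 1"
  shows "line_nbhd (h \<circ> l0) n \<subseteq> orbit_map ` Aut_nbhd E h F"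
proof
  fix p assume p: "p \<in> line_nbhd (h \<circ> l0) n"
  obtain l where l: "bi_line E l" "line_triple l = p"
    and agree: "\<And>i. \<bar>i\<bar> \<le> int n + 1 \<Longrightarrow> l i = (h \<circ> l0) i"
    using line_nbhd_line_triple[OF Aut_bi_line[OF h l0] p] by blast
  define k where "k = line_aut l0 (inv h \<circ> l)"
  have hl: "bi_line E (inv h \<circ> l)" using Aut_bi_line[OF Aut_inv[OF h] l(1)] .
  have inv_h: "inv h (h x) = x" "h (inv h x) = x" for x
    using Aut_inv_comp[OF h] Aut_comp_inv[OF h] by (metis comp_apply id_apply)+
  have "(inv h \<circ> l) i = l0 i" if "\<bar>i\<bar> \<le> int n + 1" for i using agree[OF that] inv_h by simp
  then have "k u = u" if "u \<in> F" for u
    unfolding k_def using line_aut_fixes_ball[OF l0 hl _ F[OF that]] by blast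
  moreover have "k \<in> Aut E" unfolding k_def using line_aut_in_Aut[OF l0 hl] .
  ultimately have "h \<circ> k \<in> Aut_nbhd E h F" unfolding Aut_nbhd_def using Aut_comp[OF h] by auto
  moreover have "h \<circ> k \<circ> l0 = l"
    using line_aut_line[OF l0 hl] inv_h unfolding k_def by (simp add: fun_eq_iff)
  then have "orbit_map (h \<circ> k) = p"
    using orbit_map_eq Aut_comp[OF h \<open>k \<in> Aut E\<close>] l(2) by (simp add: o_assoc)
  ultimately show "p \<in> orbit_map ` Aut_nbhd E h F" by blast
qed

lemma open_map_orbit_map: "open_map (Aut_top E) (P_top E) orbit_map"
  unfolding open_map_def
proof (intro allI impI)
  fix U assume U: "openin (Aut_top E) U"
  show "openin (P_top E) (orbit_map ` U)"
  proof (subst openin_subopen, intro ballI)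
    fix p assume "p \<in> orbit_map ` U"
    then obtain h where h: "h \<in> U" "p = orbit_map h" by blast
    obtain F where F: "finite F" "Aut_nbhd E h F \<subseteq> U" using U h(1) openin_Aut_top by blast
    have hA: "h \<in> Aut E" using U h(1) openin_Aut_top by blast
    define n where "n = Max ((\<lambda>u. length (path_to (l0 0) u)) ` F)"
    have "length (path_to (l0 0) u) \<le> n" if "u \<in> F" for u
      unfolding n_def using F(1) that by (intro Max_ge) auto
    then have "length (path_to (l0 0) u) \<le> n + 1" if "u \<in> F" for u
      using that by fastforce
    then have "line_nbhd (h \<circ> l0) n \<subseteq> orbit_map ` U"
      using line_nbhd_subset_orbit_map[OF hA] F(2) by blast
    moreover have "p \<in> line_nbhd (h \<circ> l0) n"
      using h(2) orbit_map_eq[OF hA] line_triple_in_line_nbhd Aut_bi_line[OF hA l0] by simp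
    ultimately show "\<exists>T. openin (P_top E) T \<and> p \<in> T \<and> T \<subseteq> orbit_map ` U"
      using openin_line_nbhd Aut_bi_line[OF hA l0] by blast
  qed
qed

end

theorem proposition2p5:
  fixes q :: nat and E :: "'v \<Rightarrow> 'v \<Rightarrow> bool" and v0 :: 'v
    and \<omega>m \<omega>p :: "(nat \<Rightarrow> 'v) set"
  assumes "q \<ge> 2" and "regular_tree q E"
    and "\<omega>m \<in> boundary E" and "\<omega>p \<in> boundary E" and "\<omega>m \<noteq> \<omega>p"
    and "v0 \<in> geod E \<omega>m \<omega>p"
  shows "homeomorphic_map (GmodM_top E \<omega>m \<omega>p) (P_top E) (psi (Aut E) v0 \<omega>m \<omega>p)"
proof -
  interpret regular_tree_graph q E by (rule regular_tree_graph.intro) fact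
  obtain l0 where l0: "bi_line E l0" "l0 0 = v0"
    "\<omega>m = ray_end E (ray_minus l0)" "\<omega>p = ray_end E (ray_plus l0)"
    using geod_bi_line[OF assms(3,4,6)] .
  interpret L: reference_line q E l0 by unfold_locales (fact l0(1))
  have "quotient_map (Aut_top E) (P_top E) L.orbit_map"
    by (rule continuous_open_imp_quotient_map[OF L.continuous_map_orbit_map L.open_map_orbit_map])
      (simp add: topspace_Aut_top topspace_P_top L.orbit_map_image)
  then show ?thesis
    unfolding GmodM_top_def l0(3,4) l0(2)[symmetric]
    by (rule homeomorphic_map_quot_top)
      (simp add: topspace_Aut_top L.psi_lcoset, metis topspace_Aut_top L.lcoset_eq_if_orbit_map_eq)
qed

end
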